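(* Let $G$ be a probability distribution on $\mathbb{R}$ (not necessarily symmetric), and let $\mu\sim G$, $Z\mid\mu\sim\mathrm{N}(\mu,1)$. Consider the optimization problems over functions $\delta:\mathbb{R}\to\mathbb{R}$: (a) minimize $\mathbb{E}_G[(\delta(Z)-\mu)^2]$ subject to $\delta$ being odd, i.e. $\delta(-z)=-\delta(z)$ for all $z$; (b) minimize $\sup\{\mathbb{E}_{\tilde G}[(\delta(Z)-\mu)^2]:\ \tilde G \text{ a distribution on }\mathbb{R}\text{ with } \mathrm{Symm}[\tilde G]=\mathrm{Symm}[G]\}$, where under $\mathbb{E}_{\tilde G}$ we have $\mu\sim\tilde G$, $Z\mid\mu\sim\mathrm{N}(\mu,1)$. Then the solution of both problems is the symmetrized posterior mean $\delta^{\mathrm{Symm}}_G(z)=\mathbb{E}_{\mathrm{Symm}[G]}[\mu\mid Z=z]$.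
   Context: $\mathrm{Symm}[G](A)=\{G(A)+G(-A)\}/2$ for Borel $A$ (the law of $\epsilon\mu$ with $\mu\sim G$ and $\epsilon$ an independent uniform random sign). $\mathbb{E}_{\mathrm{Symm}[G]}[\mu\mid Z=z]=\int\mu\varphi(z;\mu)\mathrm{Symm}[G](d\mu)/\int\varphi(z;\mu)\mathrm{Symm}[G](d\mu)$, where $\varphi(z;\mu)$ is the $\mathrm{N}(\mu,1)$ density. *)

theory Defs
  imports "HOL-Probability.Probability"
begin

definition Symm :: "real measure \<Rightarrow> real measure" where
  "Symm G = measure_of UNIV (sets borel)
     (\<lambda>A. (emeasure G A + emeasure G ((\<lambda>x. - x) -` A)) / 2)"

definition is_distr :: "real measure \<Rightarrow> bool" where
  "is_distr G \<longleftrightarrow> prob_space G \<and> sets G = sets borel"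

definition risk :: "real measure \<Rightarrow> (real \<Rightarrow> real) \<Rightarrow> ennreal" where
  "risk G \<delta> = (\<integral>\<^sup>+ \<mu>. (\<integral>\<^sup>+ z. ennreal ((\<delta> z - \<mu>)\<^sup>2 * normal_density \<mu> 1 z) \<partial>lborel) \<partial>G)"

definition worst_risk :: "real measure \<Rightarrow> (real \<Rightarrow> real) \<Rightarrow> ennreal" where
  "worst_risk G \<delta> = (SUP G' \<in> {G'. is_distr G' \<and> Symm G' = Symm G}. risk G' \<delta>)"

definition delta_symm :: "real measure \<Rightarrow> real \<Rightarrow> real" where
  "delta_symm G z = (\<integral> m. m * normal_density m 1 z \<partial>Symm G) / (\<integral> m. normal_density m 1 z \<partial>Symm G)"

end

theory Submission
  imports Defs
begin

text \<open>
  Reflecting \<open>(\<mu>, Z) \<mapsto> (-\<mu>, -Z)\<close> preserves the Gaussian location model and, for an odd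
  estimator \<open>\<delta>\<close>, the loss \<open>(\<delta>(Z) - \<mu>)\<^sup>2\<close>. Hence the risk of an odd estimator under \<open>G\<close> is the
  same as under \<open>Symm[G]\<close>, and so it depends on \<open>G\<close> only through \<open>Symm[G]\<close>. Under the prior
  \<open>Symm[G]\<close> the Bayes rule is the posterior mean, which is odd because the prior is symmetric.
  It therefore minimises the risk under \<open>G\<close> among odd rules; and since its risk is constant
  on the class \<open>{G'. Symm[G'] = Symm[G]}\<close>, which contains \<open>Symm[G]\<close> itself, it also minimises
  the worst-case risk over that class among all rules.
\<close>

text \<open>
  \<^const>\<open>Symm\<close> is given by \<^const>\<open>measure_of\<close>, which has the intended measure of sets
  only once that set function is known to be a measure. The fair-coin mixture of \<open>G\<close> and its
  reflection is such a measure, and the Giry monad also computes its integrals.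
\<close>

definition reflection_mixture :: "real measure \<Rightarrow> real measure" where
  "reflection_mixture G =
     measure_pmf (bernoulli_pmf (1/2)) \<bind> (\<lambda>b. if b then G else distr G borel uminus)"

lemma
  assumes G: "is_distr G"
  shows prob_space_reflection_mixture: "prob_space (reflection_mixture G)"
    and sets_reflection_mixture: "sets (reflection_mixture G) = sets borel"
    and nn_integral_reflection_mixture: "\<And>f. f \<in> borel_measurable borel \<Longrightarrow>
      (\<integral>\<^sup>+x. f x \<partial>reflection_mixture G) = ((\<integral>\<^sup>+x. f x \<partial>G) + (\<integral>\<^sup>+x. f (- x) \<partial>G)) / 2"
proof -
  define K where "K b = (if b then G else distr G borel uminus)" for b
  have G_prob: "prob_space G" and G_sets: "sets G = sets borel"
    using G by (auto simp: is_distr_def)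
  have uminus_meas: "uminus \<in> borel_measurable G"
    by (simp add: measurable_cong_sets[OF G_sets refl])
  have K_prob: "prob_space (K b)" and K_sets: "sets (K b) = sets borel" for b
    using prob_space.prob_space_distr[OF G_prob uminus_meas] G_prob G_sets by (auto simp: K_def)
  have K_meas: "K \<in> measurable (measure_pmf (bernoulli_pmf (1/2))) (subprob_algebra borel)"
    using K_prob K_sets by (auto simp: space_subprob_algebra prob_space_imp_subprob_space)
  have mix: "reflection_mixture G = measure_pmf (bernoulli_pmf (1/2)) \<bind> K"
    by (simp add: reflection_mixture_def K_def[abs_def])
  show "prob_space (reflection_mixture G)"
    unfolding mix
    by (rule prob_space.prob_space_bind[OF measure_pmf.prob_space_axioms _ K_meas])
       (auto intro: K_prob)
  show "sets (reflection_mixture G) = sets borel"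
    unfolding mix by (rule sets_bind[OF K_sets]) auto
  show "(\<integral>\<^sup>+x. f x \<partial>reflection_mixture G) = ((\<integral>\<^sup>+x. f x \<partial>G) + (\<integral>\<^sup>+x. f (- x) \<partial>G)) / 2"
    if f: "f \<in> borel_measurable borel" for f
  proof -
    have "(\<integral>\<^sup>+x. f x \<partial>reflection_mixture G)
        = (\<integral>\<^sup>+b. \<integral>\<^sup>+x. f x \<partial>K b \<partial>measure_pmf (bernoulli_pmf (1/2)))"
      unfolding mix by (rule nn_integral_bind[OF f K_meas])
    also have "\<dots> = (\<Sum>b\<in>UNIV. (\<integral>\<^sup>+x. f x \<partial>K b) * pmf (bernoulli_pmf (1/2)) b)"
      by (subst nn_integral_measure_pmf_finite) auto
    also have "\<dots> = ((\<integral>\<^sup>+x. f x \<partial>G) + (\<integral>\<^sup>+x. f (- x) \<partial>G)) / 2"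
      using f uminus_meas
      by (simp add: UNIV_bool K_def nn_integral_distr distrib_right divide_ennreal_def
          ennreal_divide_numeral[symmetric] ennreal_times_divide[symmetric])
    finally show ?thesis .
  qed
qed

lemma vimage_uminus_borel: "A \<in> sets borel \<Longrightarrow> uminus -` A \<in> sets (borel :: real measure)"
  by (rule measurable_sets_borel[of _ borel]) auto

lemma emeasure_reflection_mixture:
  assumes G: "is_distr G" and A: "A \<in> sets borel"
  shows "emeasure (reflection_mixture G) A = (emeasure G A + emeasure G (uminus -` A)) / 2"
proof -
  have G_sets: "sets G = sets borel" using G by (simp add: is_distr_def)
  have "emeasure (reflection_mixture G) A = (\<integral>\<^sup>+x. indicator A x \<partial>reflection_mixture G)"
    using A by (simp add: sets_reflection_mixture[OF G])
  also have "\<dots> = ((\<integral>\<^sup>+x. indicator A x \<partial>G) + (\<integral>\<^sup>+x. indicator (uminus -` A) x \<partial>G)) / 2"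
    using A by (simp add: nn_integral_reflection_mixture[OF G] indicator_def)
  also have "\<dots> = (emeasure G A + emeasure G (uminus -` A)) / 2"
    using A G_sets by (simp add: vimage_uminus_borel)
  finally show ?thesis .
qed

lemma Symm_eqI:
  assumes M_sets: "sets M = sets borel"
    and M_emeasure: "\<And>A. A \<in> sets borel \<Longrightarrow>
      emeasure M A = (emeasure G A + emeasure G (uminus -` A)) / 2"
  shows "Symm G = M"
proof -
  have "space M = UNIV" using sets_eq_imp_space_eq[OF M_sets] by simp
  then have "M = measure_of UNIV (sets borel) (emeasure M)"
    using measure_of_of_measure[of M] M_sets by simp
  also have "\<dots> = Symm G"
    unfolding Symm_def
  proof (rule measure_of_eq)
    have "sigma_sets UNIV (sets borel) = sets (borel :: real measure)"
      using sets.sigma_sets_eq[of "borel :: real measure"] by simp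
    then show "A \<in> sigma_sets UNIV (sets borel) \<Longrightarrow>
        emeasure M A = (emeasure G A + emeasure G (uminus -` A)) / 2" for A
      using M_emeasure by simp
  qed simp
  finally show ?thesis ..
qed

lemma Symm_eq_reflection_mixture: "is_distr G \<Longrightarrow> Symm G = reflection_mixture G"
  by (rule Symm_eqI) (simp_all add: sets_reflection_mixture emeasure_reflection_mixture)

lemma
  assumes G: "is_distr G"
  shows prob_space_Symm: "prob_space (Symm G)"
    and sets_Symm: "sets (Symm G) = sets borel"
    and is_distr_Symm: "is_distr (Symm G)"
    and nn_integral_Symm: "\<And>f. f \<in> borel_measurable borel \<Longrightarrow>
      (\<integral>\<^sup>+x. f x \<partial>Symm G) = ((\<integral>\<^sup>+x. f x \<partial>G) + (\<integral>\<^sup>+x. f (- x) \<partial>G)) / 2"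
    and emeasure_Symm: "\<And>A. A \<in> sets borel \<Longrightarrow>
      emeasure (Symm G) A = (emeasure G A + emeasure G (uminus -` A)) / 2"
  using G by (simp_all add: Symm_eq_reflection_mixture is_distr_def prob_space_reflection_mixture
      sets_reflection_mixture nn_integral_reflection_mixture emeasure_reflection_mixture)

lemma ennreal_add_self_half: "(x + x) / 2 = (x :: ennreal)"
  by (simp flip: mult_2 add: ennreal_mult_divide_eq[of 2 x, simplified] mult.commute)

lemma nn_integral_Symm_even:
  assumes G: "is_distr G" and f: "f \<in> borel_measurable borel" and even: "\<And>x. f (- x) = f x"
  shows "(\<integral>\<^sup>+x. f x \<partial>Symm G) = (\<integral>\<^sup>+x. f x \<partial>G)"
  by (simp add: nn_integral_Symm[OF G f] even ennreal_add_self_half)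

lemma emeasure_Symm_uminus:
  assumes G: "is_distr G" and A: "A \<in> sets borel"
  shows "emeasure (Symm G) (uminus -` A) = emeasure (Symm G) A"
proof -
  have "uminus -` (uminus -` A) = A" by auto
  then show ?thesis
    using A by (simp add: emeasure_Symm[OF G] vimage_uminus_borel add.commute)
qed

lemma Symm_Symm: "is_distr G \<Longrightarrow> Symm (Symm G) = Symm G"
  by (rule Symm_eqI) (simp_all add: sets_Symm emeasure_Symm_uminus ennreal_add_self_half)

lemma distr_Symm_uminus:
  assumes G: "is_distr G"
  shows "distr (Symm G) borel uminus = Symm G"
proof (rule measure_eqI)
  have uminus_meas: "uminus \<in> borel_measurable (Symm G)"
    by (simp add: measurable_cong_sets[OF sets_Symm[OF G] refl])
  have "space (Symm G) = UNIV"
    using sets_eq_imp_space_eq[OF sets_Symm[OF G]] by simp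
  then show "emeasure (distr (Symm G) borel uminus) A = emeasure (Symm G) A"
    if "A \<in> sets (distr (Symm G) borel uminus)" for A
    using that by (simp add: emeasure_distr[OF uminus_meas] emeasure_Symm_uminus[OF G])
qed (simp add: sets_Symm[OF G])

lemma integral_Symm_reflect:
  fixes f :: "real \<Rightarrow> real"
  assumes G: "is_distr G" and f: "f \<in> borel_measurable borel"
  shows "(\<integral>m. f (- m) \<partial>Symm G) = (\<integral>m. f m \<partial>Symm G)"
proof -
  have "(\<integral>m. f (- m) \<partial>Symm G) = (\<integral>m. f m \<partial>distr (Symm G) borel uminus)"
    using f by (simp add: integral_distr measurable_cong_sets[OF sets_Symm[OF G] refl])
  then show ?thesis
    by (simp add: distr_Symm_uminus[OF G])
qed

lemma normal_density_uminus: "normal_density (- m) \<sigma> (- z) = normal_density m \<sigma> z"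
  by (simp add: normal_density_def power2_eq_square algebra_simps)

lemma normal_density_moment_bound:
  fixes m z :: real
  shows "(1 + m\<^sup>2) * normal_density m 1 z \<le> 5 + 2 * z\<^sup>2"
proof -
  define t where "t = (z - m)\<^sup>2 / 2"
  define e where "e = exp (- t)"
  have e: "0 < e" "e \<le> 1" by (auto simp: e_def t_def)
  have "t \<le> exp t" using exp_ge_add_one_self[of t] by linarith
  then have "t * e \<le> 1" by (simp add: e_def exp_minus field_simps)
  then have tail: "(z - m)\<^sup>2 * e \<le> 2" by (simp add: t_def)
  have "0 \<le> (2 * z - m)\<^sup>2" by simp
  then have "m\<^sup>2 \<le> 2 * (z - m)\<^sup>2 + 2 * z\<^sup>2" by (simp add: power2_eq_square algebra_simps)
  then have "m\<^sup>2 * e \<le> (2 * (z - m)\<^sup>2 + 2 * z\<^sup>2) * e"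
    using e(1) by (intro mult_right_mono) auto
  then have "(1 + m\<^sup>2) * e \<le> e + 2 * ((z - m)\<^sup>2 * e) + 2 * (z\<^sup>2 * e)"
    by (simp add: algebra_simps)
  also have "\<dots> \<le> 5 + 2 * z\<^sup>2"
    using e tail mult_left_le[of e "z\<^sup>2"] by simp
  finally have bound: "(1 + m\<^sup>2) * e \<le> 5 + 2 * z\<^sup>2" .
  have "1 \<le> sqrt (2 * pi)" using pi_gt3 by (simp add: real_le_rsqrt)
  then have "e / sqrt (2 * pi) \<le> e"
    using e(1) by (simp add: divide_le_eq)
  moreover have "normal_density m 1 z = e / sqrt (2 * pi)"
    by (simp add: normal_density_def e_def t_def)
  ultimately have "(1 + m\<^sup>2) * normal_density m 1 z \<le> (1 + m\<^sup>2) * e"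
    by (metis add_nonneg_nonneg mult_left_mono zero_le_one zero_le_power2)
  with bound show ?thesis by linarith
qed

lemma integrable_normal_density_moment:
  assumes M: "finite_measure M" "sets M = sets borel" and k: "k \<le> 2"
  shows "integrable M (\<lambda>m. m ^ k * normal_density m 1 z)"
proof -
  interpret finite_measure M by (rule M(1))
  have "\<bar>m\<bar> ^ k \<le> 1 + m\<^sup>2" for m :: real
  proof (cases "\<bar>m\<bar> \<le> 1")
    case True
    then have "\<bar>m\<bar> ^ k \<le> 1" by (simp add: power_le_one)
    then show ?thesis by (simp add: add_increasing2)
  next
    case False
    then have "\<bar>m\<bar> ^ k \<le> \<bar>m\<bar> ^ 2" using k by (intro power_increasing) auto
    then show ?thesis by simp
  qed
  then have "norm (m ^ k * normal_density m 1 z) \<le> 5 + 2 * z\<^sup>2" for m :: real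
    using normal_density_moment_bound[of m z] normal_density_nonneg[of m 1 z]
      mult_right_mono[of "\<bar>m\<bar> ^ k" "1 + m\<^sup>2" "normal_density m 1 z"]
    by (simp add: abs_mult power_abs)
  moreover have "(\<lambda>m. m ^ k * normal_density m 1 z) \<in> borel_measurable M"
    unfolding measurable_cong_sets[OF M(2) refl] normal_density_def by measurable
  ultimately show ?thesis
    by (intro integrable_const_bound[where B = "5 + 2 * z\<^sup>2"]) auto
qed

lemma weighted_mean_minimizes_squared_loss:
  fixes M :: "real measure" and w :: "real \<Rightarrow> real"
  assumes M: "prob_space M" and w_pos: "\<And>m. 0 < w m"
    and w_int: "integrable M w" "integrable M (\<lambda>m. m * w m)" "integrable M (\<lambda>m. m\<^sup>2 * w m)"
  shows "(\<integral>\<^sup>+m. ennreal (((\<integral>m. m * w m \<partial>M) / (\<integral>m. w m \<partial>M) - m)\<^sup>2 * w m) \<partial>M)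
    \<le> (\<integral>\<^sup>+m. ennreal ((d - m)\<^sup>2 * w m) \<partial>M)"
proof -
  interpret prob_space M by (rule M)
  have w_nonneg: "0 \<le> w m" for m using w_pos[of m] by simp
  define a where "a = (\<integral>m. w m \<partial>M)"
  define b where "b = (\<integral>m. m * w m \<partial>M)"
  define c where "c = (\<integral>m. m\<^sup>2 * w m \<partial>M)"
  have loss: "(\<integral>\<^sup>+m. ennreal ((x - m)\<^sup>2 * w m) \<partial>M) = ennreal (x\<^sup>2 * a - 2 * x * b + c)" for x
  proof -
    have expand: "(\<lambda>m. (x - m)\<^sup>2 * w m) = (\<lambda>m. x\<^sup>2 * w m - 2 * x * (m * w m) + m\<^sup>2 * w m)"
      by (simp add: fun_eq_iff power2_eq_square algebra_simps)
    have "integrable M (\<lambda>m. (x - m)\<^sup>2 * w m)"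
      unfolding expand using w_int by simp
    then have "(\<integral>\<^sup>+m. ennreal ((x - m)\<^sup>2 * w m) \<partial>M) = ennreal (\<integral>m. (x - m)\<^sup>2 * w m \<partial>M)"
      by (intro nn_integral_eq_integral AE_I2 mult_nonneg_nonneg zero_le_power2 w_nonneg)
    also have "(\<integral>m. (x - m)\<^sup>2 * w m \<partial>M) = x\<^sup>2 * a - 2 * x * b + c"
      unfolding expand a_def b_def c_def using w_int by simp
    finally show ?thesis .
  qed
  have "a \<noteq> 0"
  proof
    assume "a = 0"
    then have "AE m in M. w m = 0"
      using integral_nonneg_eq_0_iff_AE[OF w_int(1)] w_nonneg by (simp add: a_def)
    then have "AE m in M. False"
      by (rule eventually_mono) (metis w_pos less_irrefl)
    then show False by (simp add: AE_False)
  qed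
  moreover have "0 \<le> a" unfolding a_def using w_nonneg by simp
  ultimately have "0 < a" by simp
  then have "(d\<^sup>2 * a - 2 * d * b + c) - ((b / a)\<^sup>2 * a - 2 * (b / a) * b + c) = a * (d - b / a)\<^sup>2"
    by (simp add: power2_eq_square field_simps)
  moreover have "0 \<le> a * (d - b / a)\<^sup>2" using \<open>0 < a\<close> by simp
  ultimately have "(b / a)\<^sup>2 * a - 2 * (b / a) * b + c \<le> d\<^sup>2 * a - 2 * d * b + c" by linarith
  then show ?thesis
    unfolding loss a_def[symmetric] b_def[symmetric] by (rule ennreal_leI)
qed

lemma risk_eq_nn_integral_posterior_loss:
  assumes M: "sigma_finite_measure M" "sets M = sets borel"
    and \<delta>[measurable]: "\<delta> \<in> borel_measurable borel"
  shows "risk M \<delta> = (\<integral>\<^sup>+z. \<integral>\<^sup>+m. ennreal ((\<delta> z - m)\<^sup>2 * normal_density m 1 z) \<partial>M \<partial>lborel)"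
proof -
  interpret pair_sigma_finite M lborel
    by (simp add: pair_sigma_finite_def M(1) lborel.sigma_finite_measure_axioms)
  have pair_sets: "sets (M \<Otimes>\<^sub>M lborel) = sets (borel \<Otimes>\<^sub>M borel)"
    by (rule sets_pair_measure_cong[OF M(2)]) simp
  have "(\<lambda>(m, z). ennreal ((\<delta> z - m)\<^sup>2 * normal_density m 1 z)) \<in> borel_measurable (M \<Otimes>\<^sub>M lborel)"
    unfolding measurable_cong_sets[OF pair_sets refl] normal_density_def by measurable
  then show ?thesis
    unfolding risk_def by (rule Fubini'[symmetric])
qed

lemma risk_Symm_odd:
  assumes G: "is_distr G" and \<delta>[measurable]: "\<delta> \<in> borel_measurable borel"
    and odd: "\<And>z. \<delta> (- z) = - \<delta> z"
  shows "risk (Symm G) \<delta> = risk G \<delta>"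
proof -
  define h where "h \<mu> = (\<integral>\<^sup>+z. ennreal ((\<delta> z - \<mu>)\<^sup>2 * normal_density \<mu> 1 z) \<partial>lborel)" for \<mu>
  have h_meas: "h \<in> borel_measurable borel"
    unfolding h_def[abs_def] normal_density_def by measurable
  have h_even: "h (- \<mu>) = h \<mu>" for \<mu>
  proof -
    have "h (- \<mu>) = (\<integral>\<^sup>+z. ennreal ((\<delta> z + \<mu>)\<^sup>2 * normal_density (- \<mu>) 1 z)
        \<partial>distr lborel borel uminus)"
      by (simp add: h_def lborel_distr_uminus)
    also have "\<dots> = (\<integral>\<^sup>+z. ennreal ((\<delta> (- z) + \<mu>)\<^sup>2 * normal_density (- \<mu>) 1 (- z))
        \<partial>lborel)"
      by (rule nn_integral_distr) (simp_all add: normal_density_def)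
    also have "\<dots> = h \<mu>"
      unfolding h_def normal_density_uminus odd
      by (simp add: power2_eq_square algebra_simps)
    finally show ?thesis .
  qed
  show ?thesis
    using nn_integral_Symm_even[OF G h_meas h_even] by (simp add: risk_def h_def)
qed

lemma worst_risk_odd:
  assumes G: "is_distr G" and \<delta>: "\<delta> \<in> borel_measurable borel" and odd: "\<And>z. \<delta> (- z) = - \<delta> z"
  shows "worst_risk G \<delta> = risk G \<delta>"
proof -
  have "risk G' \<delta> = risk G \<delta>" if "is_distr G'" "Symm G' = Symm G" for G'
    using risk_Symm_odd[OF that(1) \<delta> odd] risk_Symm_odd[OF G \<delta> odd] that(2) by simp
  then have "worst_risk G \<delta> = (SUP G' \<in> {G'. is_distr G' \<and> Symm G' = Symm G}. risk G \<delta>)"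
    unfolding worst_risk_def by (intro SUP_cong) auto
  also have "\<dots> = risk G \<delta>"
    using G by (intro SUP_const) auto
  finally show ?thesis .
qed

lemma risk_Symm_le_worst_risk: "is_distr G \<Longrightarrow> risk (Symm G) \<delta> \<le> worst_risk G \<delta>"
  unfolding worst_risk_def by (rule SUP_upper) (simp add: is_distr_Symm Symm_Symm)

lemma borel_measurable_delta_symm:
  assumes G: "is_distr G"
  shows "delta_symm G \<in> borel_measurable borel"
proof -
  interpret S: prob_space "Symm G" by (rule prob_space_Symm[OF G])
  have pair_sets: "sets (borel \<Otimes>\<^sub>M Symm G) = sets (borel \<Otimes>\<^sub>M borel)"
    by (rule sets_pair_measure_cong[OF refl sets_Symm[OF G]])
  have "(\<lambda>(z, m). m * normal_density m 1 z) \<in> borel_measurable (borel \<Otimes>\<^sub>M Symm G)"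
    and "(\<lambda>(z, m). normal_density m 1 z) \<in> borel_measurable (borel \<Otimes>\<^sub>M Symm G)"
    unfolding measurable_cong_sets[OF pair_sets refl] normal_density_def by measurable
  then show ?thesis
    unfolding delta_symm_def[abs_def]
    by (intro borel_measurable_divide S.borel_measurable_lebesgue_integral)
qed

lemma delta_symm_uminus:
  assumes G: "is_distr G"
  shows "delta_symm G (- z) = - delta_symm G z"
proof -
  have nd_meas: "(\<lambda>m. normal_density m 1 z') \<in> borel_measurable borel" for z'
    unfolding normal_density_def by measurable
  have "(\<integral>m. m * normal_density m 1 (- z) \<partial>Symm G)
      = (\<integral>m. - m * normal_density (- m) 1 (- z) \<partial>Symm G)"
    by (rule integral_Symm_reflect[OF G, symmetric]) (use nd_meas in simp)
  also have "\<dots> = - (\<integral>m. m * normal_density m 1 z \<partial>Symm G)"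
    by (simp add: normal_density_uminus)
  finally have num: "(\<integral>m. m * normal_density m 1 (- z) \<partial>Symm G)
      = - (\<integral>m. m * normal_density m 1 z \<partial>Symm G)" .
  have "(\<integral>m. normal_density m 1 (- z) \<partial>Symm G) = (\<integral>m. normal_density (- m) 1 (- z) \<partial>Symm G)"
    by (rule integral_Symm_reflect[OF G, symmetric]) (rule nd_meas)
  then have den: "(\<integral>m. normal_density m 1 (- z) \<partial>Symm G) = (\<integral>m. normal_density m 1 z \<partial>Symm G)"
    by (simp add: normal_density_uminus)
  show ?thesis
    unfolding delta_symm_def num den by simp
qed

lemma risk_Symm_delta_symm_le:
  assumes G: "is_distr G" and \<delta>: "\<delta> \<in> borel_measurable borel"
  shows "risk (Symm G) (delta_symm G) \<le> risk (Symm G) \<delta>"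
proof -
  interpret S: prob_space "Symm G" by (rule prob_space_Symm[OF G])
  note moment = integrable_normal_density_moment[OF S.finite_measure_axioms sets_Symm[OF G]]
  show ?thesis
    unfolding risk_eq_nn_integral_posterior_loss[OF S.sigma_finite_measure_axioms sets_Symm[OF G] \<delta>]
      risk_eq_nn_integral_posterior_loss[OF S.sigma_finite_measure_axioms sets_Symm[OF G]
        borel_measurable_delta_symm[OF G]]
  proof (rule nn_integral_mono)
    fix z
    show "(\<integral>\<^sup>+m. ennreal ((delta_symm G z - m)\<^sup>2 * normal_density m 1 z) \<partial>Symm G)
      \<le> (\<integral>\<^sup>+m. ennreal ((\<delta> z - m)\<^sup>2 * normal_density m 1 z) \<partial>Symm G)"
      unfolding delta_symm_def
      using moment[of 0 z] moment[of 1 z] moment[of 2 z]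
      by (intro weighted_mean_minimizes_squared_loss[OF prob_space_Symm[OF G]])
         (simp_all add: normal_density_pos)
  qed
qed

theorem proposition5:
  fixes G :: "real measure"
  assumes "is_distr G"
  shows "delta_symm G \<in> borel_measurable borel
    \<and> (\<forall>z. delta_symm G (- z) = - delta_symm G z)
    \<and> (\<forall>\<delta> \<in> borel_measurable borel. (\<forall>z. \<delta> (- z) = - \<delta> z) \<longrightarrow> risk G (delta_symm G) \<le> risk G \<delta>)
    \<and> (\<forall>\<delta> \<in> borel_measurable borel. worst_risk G (delta_symm G) \<le> worst_risk G \<delta>)"
proof -
  note meas = borel_measurable_delta_symm[OF assms]
  note odd = delta_symm_uminus[OF assms]
  have odd_optimal: "risk G (delta_symm G) \<le> risk G \<delta>"
    if \<delta>: "\<delta> \<in> borel_measurable borel" and \<delta>_odd: "\<forall>z. \<delta> (- z) = - \<delta> z" for \<delta>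
  proof -
    have "risk G (delta_symm G) = risk (Symm G) (delta_symm G)"
      by (rule risk_Symm_odd[OF assms meas odd, symmetric])
    also have "\<dots> \<le> risk (Symm G) \<delta>" by (rule risk_Symm_delta_symm_le[OF assms \<delta>])
    also have "\<dots> = risk G \<delta>" by (rule risk_Symm_odd[OF assms \<delta> \<delta>_odd[rule_format]])
    finally show ?thesis .
  qed
  have minimax: "worst_risk G (delta_symm G) \<le> worst_risk G \<delta>"
    if \<delta>: "\<delta> \<in> borel_measurable borel" for \<delta>
  proof -
    have "worst_risk G (delta_symm G) = risk (Symm G) (delta_symm G)"
      using worst_risk_odd[OF assms meas odd] risk_Symm_odd[OF assms meas odd] by simp
    also have "\<dots> \<le> risk (Symm G) \<delta>" by (rule risk_Symm_delta_symm_le[OF assms \<delta>])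
    also have "\<dots> \<le> worst_risk G \<delta>" by (rule risk_Symm_le_worst_risk[OF assms])
    finally show ?thesis .
  qed
  show ?thesis using meas odd odd_optimal minimax by blast
qed

end
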